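(* Let $\mu\ne\delta_{\mathbf 0}$ be a probability measure on $\mathbb{R}^d$ with $\int\|\mathbf x\|^2d\mu<\infty$ and $\int\mathbf x\,d\mu=\mathbf 0$, and let $(\boldsymbol\Theta_n)_{n\ge1}$ be i.i.d. $\mu$-distributed random vectors. Let $(r_n)_{n\ge1}\in\ell^2$ be a real sequence with infinitely many nonzero terms. Then $\sum_{n=1}^\infty r_n\boldsymbol\Theta_n$ converges almost surely, and for every $\mathbf x\in\mathbb{R}^d$, $\mathbb P\big(\sum_{n=1}^\infty r_n\boldsymbol\Theta_n=\mathbf x\big)=0$. *)

theory Defs
  imports "HOL-Probability.Probability"
begin

end

(* The series converges almost surely by Kolmogorov's convergence criterion, applied to each
   coordinate: the second moments r_n^2 E|Theta|^2 are summable. The criterion itself follows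
   from Kolmogorov's maximal inequality.

   Since mu has mean 0 and is not the point mass at 0, it is not a point mass at all, so its atoms
   are bounded by some q < 1. Let B be the event that the series sums to x, and S_n the partial
   sums. Given n, pick k >= n with r_k /= 0. On B, Theta_k is a measurable function of the other
   Theta_i, so by independence P(B and C) <= q P(C) for every event C determined by
   Theta_0, ..., Theta_(n-1); in particular for C = {|S_n - x| < delta}. As n tends to infinity
   these events approximate B up to {0 < |S - x| < 2 delta}, so P(B) <= q P(B) and P(B) = 0. *)

theory Submission
  imports Defs
begin

section \<open>Kolmogorov's convergence criterion\<close>

locale centered_indep_seq = prob_space +
  fixes X :: "nat \<Rightarrow> 'a \<Rightarrow> real"
  assumes indep: "indep_vars (\<lambda>_. borel) X UNIV"
    and integrable_X: "\<And>i. integrable M (X i)"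
    and expectation_X: "\<And>i. expectation (X i) = 0"
    and integrable_X_sq: "\<And>i. integrable M (\<lambda>\<omega>. (X i \<omega>)\<^sup>2)"
begin

lemma X_measurable[measurable]: "X i \<in> borel_measurable M"
  using indep unfolding indep_vars_def by auto

abbreviation past :: "nat \<Rightarrow> 'a \<Rightarrow> nat \<Rightarrow> real" where
  "past k \<omega> \<equiv> restrict (\<lambda>i. X i \<omega>) {..<k}"

lemma expectation_past_mult_X:
  assumes g: "g \<in> borel_measurable (PiM {..<k} (\<lambda>_. borel))"
    and int_g: "integrable M (\<lambda>\<omega>. g (past k \<omega>))"
    and "k \<le> i"
  shows "integrable M (\<lambda>\<omega>. g (past k \<omega>) * X i \<omega>)"
    and "expectation (\<lambda>\<omega>. g (past k \<omega>) * X i \<omega>) = 0"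
proof -
  have "indep_var (PiM {..<i} (\<lambda>_. borel)) (past i) (PiM {i} (\<lambda>_. borel)) (\<lambda>\<omega>. restrict (\<lambda>j. X j \<omega>) {i})"
    by (rule indep_var_restrict[OF indep]) auto
  moreover have "{..<k} \<subseteq> {..<i}"
    using \<open>k \<le> i\<close> by auto
  then have "(\<lambda>v. g (restrict v {..<k})) \<in> borel_measurable (PiM {..<i} (\<lambda>_. borel))"
    using measurable_restrict_subset g by measurable
  moreover have "(\<lambda>v. v i) \<in> borel_measurable (PiM {i} (\<lambda>_. borel))"
    by (rule measurable_component_singleton) auto
  ultimately have "indep_var borel (\<lambda>\<omega>. g (restrict (past i \<omega>) {..<k})) borel (\<lambda>\<omega>. restrict (\<lambda>j. X j \<omega>) {i} i)"
    by (rule indep_var_compose[unfolded comp_def])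
  moreover have "restrict (past i \<omega>) {..<k} = past k \<omega>" for \<omega>
    using \<open>k \<le> i\<close> by (auto simp: fun_eq_iff)
  ultimately have ind: "indep_var borel (\<lambda>\<omega>. g (past k \<omega>)) borel (X i)"
    by simp
  show "integrable M (\<lambda>\<omega>. g (past k \<omega>) * X i \<omega>)"
    by (rule indep_var_integrable[OF ind int_g integrable_X])
  show "expectation (\<lambda>\<omega>. g (past k \<omega>) * X i \<omega>) = 0"
    using indep_var_lebesgue_integral[OF ind int_g integrable_X] expectation_X by simp
qed

definition block_sum :: "nat \<Rightarrow> nat \<Rightarrow> 'a \<Rightarrow> real" where
  "block_sum m n \<omega> = (\<Sum>i\<in>{m..<n}. X i \<omega>)"

lemma block_sum_measurable[measurable]: "block_sum m n \<in> borel_measurable M"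
  unfolding block_sum_def by measurable

lemma integrable_block_sum: "integrable M (block_sum m n)"
  unfolding block_sum_def by (auto intro!: integrable_X)

lemma block_sum_split: "m \<le> k \<Longrightarrow> k \<le> n \<Longrightarrow> block_sum m n \<omega> = block_sum m k \<omega> + block_sum k n \<omega>"
  unfolding block_sum_def by (simp add: sum.atLeastLessThan_concat)

lemma expectation_past_mult_block_sum:
  assumes g: "g \<in> borel_measurable (PiM {..<k} (\<lambda>_. borel))"
    and int_g: "integrable M (\<lambda>\<omega>. g (past k \<omega>))"
  shows "integrable M (\<lambda>\<omega>. g (past k \<omega>) * block_sum k n \<omega>)"
    and "expectation (\<lambda>\<omega>. g (past k \<omega>) * block_sum k n \<omega>) = 0"
proof -
  have eq: "g (past k \<omega>) * block_sum k n \<omega> = (\<Sum>i\<in>{k..<n}. g (past k \<omega>) * X i \<omega>)" for \<omega>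
    by (simp add: block_sum_def sum_distrib_left)
  show "integrable M (\<lambda>\<omega>. g (past k \<omega>) * block_sum k n \<omega>)"
    unfolding eq by (intro Bochner_Integration.integrable_sum expectation_past_mult_X(1)[OF g int_g]) auto
  show "expectation (\<lambda>\<omega>. g (past k \<omega>) * block_sum k n \<omega>) = 0"
    unfolding eq
    by (subst Bochner_Integration.integral_sum)
      (auto simp: expectation_past_mult_X(2)[OF g int_g] intro: expectation_past_mult_X(1)[OF g int_g])
qed

lemma expectation_block_sum_sq:
  "integrable M (\<lambda>\<omega>. (block_sum m n \<omega>)\<^sup>2) \<and>
   expectation (\<lambda>\<omega>. (block_sum m n \<omega>)\<^sup>2) = (\<Sum>i\<in>{m..<n}. expectation (\<lambda>\<omega>. (X i \<omega>)\<^sup>2))"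
proof (induction n)
  case 0
  then show ?case by (simp add: block_sum_def)
next
  case (Suc n)
  show ?case
  proof (cases "m \<le> n")
    case False
    then show ?thesis by (simp add: block_sum_def)
  next
    case True
    define g where "g v = (\<Sum>i\<in>{m..<n}. v i)" for v :: "nat \<Rightarrow> real"
    have g: "g \<in> borel_measurable (PiM {..<n} (\<lambda>_. borel))"
      unfolding g_def by measurable
    have past: "g (past n \<omega>) = block_sum m n \<omega>" for \<omega>
      unfolding g_def block_sum_def by simp
    have cross: "integrable M (\<lambda>\<omega>. block_sum m n \<omega> * X n \<omega>)"
        "expectation (\<lambda>\<omega>. block_sum m n \<omega> * X n \<omega>) = 0"
      using expectation_past_mult_X[OF g _ order.refl] integrable_block_sum
      unfolding past by auto
    have "(block_sum m (Suc n) \<omega>)\<^sup>2 = (block_sum m n \<omega>)\<^sup>2 + 2 * (block_sum m n \<omega> * X n \<omega>) + (X n \<omega>)\<^sup>2" for \<omega>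
      using True by (simp add: block_sum_def power2_sum)
    then show ?thesis
      using Suc.IH cross integrable_X_sq[of n] True by simp
  qed
qed

lemma expectation_block_sum_sq_indicator_mono:
  assumes P[measurable]: "Measurable.pred (PiM {..<k} (\<lambda>_. borel)) P"
    and "m \<le> k" "k \<le> n"
  defines "F \<equiv> {\<omega>\<in>space M. P (past k \<omega>)}"
  shows "expectation (\<lambda>\<omega>. (block_sum m k \<omega>)\<^sup>2 * indicator F \<omega>)
           \<le> expectation (\<lambda>\<omega>. (block_sum m n \<omega>)\<^sup>2 * indicator F \<omega>)"
proof -
  define g where "g v = (\<Sum>i\<in>{m..<k}. v i) * of_bool (P v)" for v :: "nat \<Rightarrow> real"
  have g: "g \<in> borel_measurable (PiM {..<k} (\<lambda>_. borel))"
    unfolding g_def by measurable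
  have past: "g (past k \<omega>) = block_sum m k \<omega> * indicator F \<omega>" if "\<omega> \<in> space M" for \<omega>
    using that by (simp add: g_def F_def block_sum_def)
  have int_g: "integrable M (\<lambda>\<omega>. g (past k \<omega>))"
    by (subst Bochner_Integration.integrable_cong[OF refl past])
      (auto intro: integrable_real_mult_indicator integrable_block_sum simp: F_def)
  have cross: "integrable M (\<lambda>\<omega>. block_sum m k \<omega> * indicator F \<omega> * block_sum k n \<omega>)"
      "expectation (\<lambda>\<omega>. block_sum m k \<omega> * indicator F \<omega> * block_sum k n \<omega>) = 0"
  proof -
    have eq: "g (past k \<omega>) * block_sum k n \<omega> = block_sum m k \<omega> * indicator F \<omega> * block_sum k n \<omega>"
      if "\<omega> \<in> space M" for \<omega>
      using past[OF that] by simp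
    show "integrable M (\<lambda>\<omega>. block_sum m k \<omega> * indicator F \<omega> * block_sum k n \<omega>)"
        "expectation (\<lambda>\<omega>. block_sum m k \<omega> * indicator F \<omega> * block_sum k n \<omega>) = 0"
      using expectation_past_mult_block_sum[OF g int_g, of n]
      by (simp_all only: Bochner_Integration.integrable_cong[OF refl eq]
          Bochner_Integration.integral_cong[OF refl eq])
  qed
  have int_sq: "integrable M (\<lambda>\<omega>. (block_sum m l \<omega>)\<^sup>2 * indicator F \<omega>)" for l
    using expectation_block_sum_sq by (intro integrable_real_mult_indicator) (auto simp: F_def)
  have "expectation (\<lambda>\<omega>. (block_sum m k \<omega>)\<^sup>2 * indicator F \<omega>)
      = expectation (\<lambda>\<omega>. (block_sum m k \<omega>)\<^sup>2 * indicator F \<omega>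
                          + 2 * (block_sum m k \<omega> * indicator F \<omega> * block_sum k n \<omega>))"
    using int_sq cross by simp
  also have "\<dots> \<le> expectation (\<lambda>\<omega>. (block_sum m n \<omega>)\<^sup>2 * indicator F \<omega>)"
  proof (rule integral_mono)
    fix \<omega>
    have "(block_sum m k \<omega>)\<^sup>2 + 2 * (block_sum m k \<omega> * block_sum k n \<omega>) \<le> (block_sum m n \<omega>)\<^sup>2"
      using block_sum_split[OF assms(2,3)] by (simp add: power2_sum)
    then show "(block_sum m k \<omega>)\<^sup>2 * indicator F \<omega> + 2 * (block_sum m k \<omega> * indicator F \<omega> * block_sum k n \<omega>)
        \<le> (block_sum m n \<omega>)\<^sup>2 * indicator F \<omega>"
      by (simp add: indicator_def)
  qed (use int_sq cross in auto)
  finally show ?thesis .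
qed

lemma kolmogorov_maximal_inequality:
  assumes "0 < \<epsilon>"
  shows "prob {\<omega>\<in>space M. \<exists>k\<in>{m..n}. \<epsilon> \<le> \<bar>block_sum m k \<omega>\<bar>}
           \<le> (\<Sum>i\<in>{m..<n}. expectation (\<lambda>\<omega>. (X i \<omega>)\<^sup>2)) / \<epsilon>\<^sup>2"
proof -
  define first_exit where "first_exit k v \<longleftrightarrow>
      \<epsilon> \<le> \<bar>\<Sum>i\<in>{m..<k}. v i\<bar> \<and> (\<forall>l\<in>{m..<k}. \<bar>\<Sum>i\<in>{m..<l}. v i\<bar> < \<epsilon>)"
    for k and v :: "nat \<Rightarrow> real"
  define A where "A k = {\<omega>\<in>space M. first_exit k (past k \<omega>)}" for k
  have A_iff: "\<omega> \<in> A k \<longleftrightarrow>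
      \<omega> \<in> space M \<and> \<epsilon> \<le> \<bar>block_sum m k \<omega>\<bar> \<and> (\<forall>l\<in>{m..<k}. \<bar>block_sum m l \<omega>\<bar> < \<epsilon>)" for \<omega> k
    by (auto simp: A_def first_exit_def block_sum_def)
  have A_events[measurable]: "A k \<in> events" for k
  proof -
    have "A k = {\<omega>\<in>space M. \<epsilon> \<le> \<bar>block_sum m k \<omega>\<bar> \<and> (\<forall>l\<in>{m..<k}. \<bar>block_sum m l \<omega>\<bar> < \<epsilon>)}"
      by (auto simp: A_iff)
    also have "\<dots> \<in> events"
      by measurable
    finally show ?thesis .
  qed
  have "A k \<inter> A l = {}" if "m \<le> k" "k < l" for k l
    using that by (force simp: A_iff)
  then have disj: "disjoint_family_on A {m..n}"
    unfolding disjoint_family_on_def by (metis atLeastAtMost_iff inf_commute linorder_neqE_nat)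
  have union: "{\<omega>\<in>space M. \<exists>k\<in>{m..n}. \<epsilon> \<le> \<bar>block_sum m k \<omega>\<bar>} = (\<Union>k\<in>{m..n}. A k)"
  proof (intro equalityI subsetI)
    fix \<omega> assume "\<omega> \<in> {\<omega>\<in>space M. \<exists>k\<in>{m..n}. \<epsilon> \<le> \<bar>block_sum m k \<omega>\<bar>}"
    then obtain k where "\<omega> \<in> space M" "k \<in> {m..n}" "\<epsilon> \<le> \<bar>block_sum m k \<omega>\<bar>"
      and "\<And>l. l < k \<Longrightarrow> \<not> (l \<in> {m..n} \<and> \<epsilon> \<le> \<bar>block_sum m l \<omega>\<bar>)"
      using exists_least_iff[of "\<lambda>k. k \<in> {m..n} \<and> \<epsilon> \<le> \<bar>block_sum m k \<omega>\<bar>"] by blast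
    then have "\<omega> \<in> A k"
      by (force simp: A_iff not_le)
    with \<open>k \<in> {m..n}\<close> show "\<omega> \<in> (\<Union>k\<in>{m..n}. A k)"
      by blast
  qed (auto simp: A_iff)
  have int_sq: "integrable M (\<lambda>\<omega>. (block_sum m l \<omega>)\<^sup>2 * indicator F \<omega>)" if "F \<in> events" for l F
    using expectation_block_sum_sq that by (intro integrable_real_mult_indicator) auto
  have A_bound: "\<epsilon>\<^sup>2 * prob (A k) \<le> expectation (\<lambda>\<omega>. (block_sum m n \<omega>)\<^sup>2 * indicator (A k) \<omega>)"
    if "k \<in> {m..n}" for k
  proof -
    have "\<epsilon>\<^sup>2 * prob (A k) = expectation (\<lambda>\<omega>. \<epsilon>\<^sup>2 * indicator (A k) \<omega>)"
      by simp
    also have "\<dots> \<le> expectation (\<lambda>\<omega>. (block_sum m k \<omega>)\<^sup>2 * indicator (A k) \<omega>)"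
    proof (rule integral_mono)
      fix \<omega>
      have "\<epsilon>\<^sup>2 \<le> (block_sum m k \<omega>)\<^sup>2" if "\<omega> \<in> A k"
        using that \<open>0 < \<epsilon>\<close> abs_le_square_iff[of \<epsilon> "block_sum m k \<omega>"] by (simp add: A_iff)
      then show "\<epsilon>\<^sup>2 * indicator (A k) \<omega> \<le> (block_sum m k \<omega>)\<^sup>2 * indicator (A k) \<omega>"
        by (simp add: indicator_def)
    qed (auto intro!: int_sq integrable_real_indicator simp: emeasure_eq_measure)
    also have "\<dots> \<le> expectation (\<lambda>\<omega>. (block_sum m n \<omega>)\<^sup>2 * indicator (A k) \<omega>)"
      using that unfolding A_def first_exit_def
      by (intro expectation_block_sum_sq_indicator_mono) auto
    finally show ?thesis .
  qed
  have "\<epsilon>\<^sup>2 * prob {\<omega>\<in>space M. \<exists>k\<in>{m..n}. \<epsilon> \<le> \<bar>block_sum m k \<omega>\<bar>} = (\<Sum>k\<in>{m..n}. \<epsilon>\<^sup>2 * prob (A k))"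
    unfolding union by (subst finite_measure_finite_Union) (auto simp: disj sum_distrib_left)
  also have "\<dots> \<le> (\<Sum>k\<in>{m..n}. expectation (\<lambda>\<omega>. (block_sum m n \<omega>)\<^sup>2 * indicator (A k) \<omega>))"
    by (rule sum_mono) (rule A_bound)
  also have "\<dots> = expectation (\<lambda>\<omega>. (block_sum m n \<omega>)\<^sup>2 * indicator (\<Union>k\<in>{m..n}. A k) \<omega>)"
    using int_sq
    by (subst Bochner_Integration.integral_sum[symmetric])
      (auto simp: indicator_UN_disjoint[OF _ disj] sum_distrib_left)
  also have "\<dots> \<le> expectation (\<lambda>\<omega>. (block_sum m n \<omega>)\<^sup>2)"
    using expectation_block_sum_sq int_sq[of "\<Union>k\<in>{m..n}. A k" n]
    by (intro integral_mono) (auto simp: indicator_def)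
  also have "\<dots> = (\<Sum>i\<in>{m..<n}. expectation (\<lambda>\<omega>. (X i \<omega>)\<^sup>2))"
    using expectation_block_sum_sq by auto
  finally show ?thesis
    using \<open>0 < \<epsilon>\<close> by (simp add: pos_le_divide_eq mult.commute)
qed

lemma kolmogorov_tail_inequality:
  assumes summable: "summable (\<lambda>i. expectation (\<lambda>\<omega>. (X i \<omega>)\<^sup>2))" and "0 < \<epsilon>"
  shows "prob {\<omega>\<in>space M. \<exists>k\<ge>m. \<epsilon> \<le> \<bar>block_sum m k \<omega>\<bar>}
           \<le> (\<Sum>i. expectation (\<lambda>\<omega>. (X (i + m) \<omega>)\<^sup>2)) / \<epsilon>\<^sup>2"
proof -
  define v where "v i = expectation (\<lambda>\<omega>. (X i \<omega>)\<^sup>2)" for i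
  have v_nonneg: "0 \<le> v i" for i
    unfolding v_def by simp
  have tail: "summable (\<lambda>i. v (i + m))"
    using summable unfolding v_def by (subst summable_iff_shift)
  define B where "B n = {\<omega>\<in>space M. \<exists>k\<in>{m..n}. \<epsilon> \<le> \<bar>block_sum m k \<omega>\<bar>}" for n
  have "B n \<in> events" for n
    unfolding B_def by measurable
  then have "range B \<subseteq> events"
    by auto
  moreover have "incseq B"
    unfolding B_def incseq_def by auto
  ultimately have lim: "(\<lambda>n. prob (B n)) \<longlonglongrightarrow> prob (\<Union>n. B n)"
    by (rule finite_Lim_measure_incseq)
  have bound: "prob (B n) \<le> (\<Sum>i. v (i + m)) / \<epsilon>\<^sup>2" for n
  proof -
    have "(\<Sum>i\<in>{m..<n}. v i) = (\<Sum>i<n - m. v (i + m))"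
      by (cases "m \<le> n") (auto simp: atLeast0LessThan add.commute sum.atLeastLessThan_shift_0)
    also have "\<dots> \<le> (\<Sum>i. v (i + m))"
      using tail v_nonneg by (intro sum_le_suminf) auto
    finally show ?thesis
      using kolmogorov_maximal_inequality[OF \<open>0 < \<epsilon>\<close>, of m n] divide_right_mono[of _ _ "\<epsilon>\<^sup>2"]
      unfolding B_def v_def by fastforce
  qed
  have "prob (\<Union>n. B n) \<le> (\<Sum>i. v (i + m)) / \<epsilon>\<^sup>2"
    using LIMSEQ_le_const2[OF lim] bound by blast
  moreover have "(\<Union>n. B n) = {\<omega>\<in>space M. \<exists>k\<ge>m. \<epsilon> \<le> \<bar>block_sum m k \<omega>\<bar>}"
    unfolding B_def by fastforce
  ultimately show ?thesis
    unfolding v_def by simp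
qed

lemma AE_summable_of_summable_expectation_sq:
  assumes summable: "summable (\<lambda>i. expectation (\<lambda>\<omega>. (X i \<omega>)\<^sup>2))"
  shows "AE \<omega> in M. summable (\<lambda>i. X i \<omega>)"
proof -
  have AE_small: "AE \<omega> in M. \<exists>m. \<forall>k\<ge>m. \<bar>block_sum m k \<omega>\<bar> < \<epsilon>" if "0 < \<epsilon>" for \<epsilon>
  proof (rule AE_I')
    define N where "N = {\<omega>\<in>space M. \<forall>m. \<exists>k\<ge>m. \<epsilon> \<le> \<bar>block_sum m k \<omega>\<bar>}"
    have N_events: "N \<in> events"
      unfolding N_def by measurable
    define tail where "tail m = (\<Sum>i. expectation (\<lambda>\<omega>. (X (i + m) \<omega>)\<^sup>2))" for m
    have "tail = (\<lambda>m. (\<Sum>i. expectation (\<lambda>\<omega>. (X i \<omega>)\<^sup>2)) - (\<Sum>i<m. expectation (\<lambda>\<omega>. (X i \<omega>)\<^sup>2)))"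
      unfolding tail_def by (simp add: suminf_minus_initial_segment[OF summable])
    also have "\<dots> \<longlonglongrightarrow> (\<Sum>i. expectation (\<lambda>\<omega>. (X i \<omega>)\<^sup>2)) - (\<Sum>i. expectation (\<lambda>\<omega>. (X i \<omega>)\<^sup>2))"
      by (intro tendsto_diff tendsto_const summable_LIMSEQ summable)
    finally have lim: "(\<lambda>m. tail m / \<epsilon>\<^sup>2) \<longlonglongrightarrow> 0"
      by (auto intro: tendsto_divide_zero)
    have bound: "prob N \<le> tail m / \<epsilon>\<^sup>2" for m
    proof -
      have "prob N \<le> prob {\<omega>\<in>space M. \<exists>k\<ge>m. \<epsilon> \<le> \<bar>block_sum m k \<omega>\<bar>}"
        unfolding N_def by (rule finite_measure_mono) auto
      also have "\<dots> \<le> tail m / \<epsilon>\<^sup>2"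
        unfolding tail_def by (rule kolmogorov_tail_inequality[OF summable \<open>0 < \<epsilon>\<close>])
      finally show ?thesis .
    qed
    have "prob N \<le> 0"
      using LIMSEQ_le_const[OF lim] bound by blast
    then show "N \<in> null_sets M"
      using N_events measure_nonneg[of M N] by (auto simp: emeasure_eq_measure)
    show "{\<omega>\<in>space M. \<not> (\<exists>m. \<forall>k\<ge>m. \<bar>block_sum m k \<omega>\<bar> < \<epsilon>)} \<subseteq> N"
      unfolding N_def by (auto simp: not_less)
  qed
  have "AE \<omega> in M. \<forall>j. \<exists>m. \<forall>k\<ge>m. \<bar>block_sum m k \<omega>\<bar> < inverse (real (Suc j))"
    by (subst AE_all_countable) (auto intro!: AE_small)
  then show ?thesis
  proof eventually_elim
    case (elim \<omega>)
    show "summable (\<lambda>i. X i \<omega>)"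
      unfolding summable_Cauchy
    proof (intro allI impI)
      fix e :: real assume "0 < e"
      then obtain j where j: "inverse (real (Suc j)) < e / 2"
        using reals_Archimedean[of "e / 2"] by auto
      obtain m where m: "\<And>k. m \<le> k \<Longrightarrow> \<bar>block_sum m k \<omega>\<bar> < inverse (real (Suc j))"
        using elim by blast
      have "norm (\<Sum>i\<in>{m'..<n}. X i \<omega>) < e" if "m \<le> m'" for m' n
      proof (cases "m' \<le> n")
        case True
        then have "(\<Sum>i\<in>{m'..<n}. X i \<omega>) = block_sum m n \<omega> - block_sum m m' \<omega>"
          using block_sum_split[OF that True, of \<omega>] by (simp add: block_sum_def)
        then show ?thesis
          using m[of n] m[of m'] j that True by simp
      qed (use \<open>0 < e\<close> in simp)
      then show "\<exists>N. \<forall>m\<ge>N. \<forall>n. norm (\<Sum>i\<in>{m..<n}. X i \<omega>) < e"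
        by blast
    qed
  qed
qed

end

lemma (in prob_space) AE_summable_indep_zero_mean:
  fixes X :: "nat \<Rightarrow> 'a \<Rightarrow> 'd::euclidean_space"
  assumes indep: "indep_vars (\<lambda>_. borel) X UNIV"
    and integrable: "\<And>i. integrable M (X i)"
    and zero_mean: "\<And>i. expectation (X i) = 0"
    and integrable_sq: "\<And>i. integrable M (\<lambda>\<omega>. (norm (X i \<omega>))\<^sup>2)"
    and summable: "summable (\<lambda>i. expectation (\<lambda>\<omega>. (norm (X i \<omega>))\<^sup>2))"
  shows "AE \<omega> in M. summable (\<lambda>i. X i \<omega>)"
proof -
  have X_measurable[measurable]: "X i \<in> borel_measurable M" for i
    using indep unfolding indep_vars_def by auto
  have "AE \<omega> in M. summable (\<lambda>i. X i \<omega> \<bullet> b)" if b: "b \<in> Basis" for b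
  proof -
    have sq_le: "(x \<bullet> b)\<^sup>2 \<le> (norm x)\<^sup>2" for x :: 'd
      using Basis_le_norm[OF b, of x] abs_le_square_iff[of "x \<bullet> b" "norm x"] by simp
    have integrable_coord_sq: "integrable M (\<lambda>\<omega>. (X i \<omega> \<bullet> b)\<^sup>2)" for i
      by (rule Bochner_Integration.integrable_bound[OF integrable_sq[of i]]) (auto simp: sq_le)
    interpret centered_indep_seq M "\<lambda>i \<omega>. X i \<omega> \<bullet> b"
    proof
      show "indep_vars (\<lambda>_. borel) (\<lambda>i \<omega>. X i \<omega> \<bullet> b) UNIV"
        by (rule indep_vars_compose2[OF indep]) measurable
    qed (auto simp: integrable integrable_coord_sq zero_mean)
    have "summable (\<lambda>i. expectation (\<lambda>\<omega>. (X i \<omega> \<bullet> b)\<^sup>2))"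
    proof (rule summable_comparison_test[OF _ summable])
      show "\<exists>N. \<forall>i\<ge>N. norm (expectation (\<lambda>\<omega>. (X i \<omega> \<bullet> b)\<^sup>2)) \<le> expectation (\<lambda>\<omega>. (norm (X i \<omega>))\<^sup>2)"
        by (auto intro!: integral_mono integrable_coord_sq integrable_sq sq_le)
    qed
    then show ?thesis
      by (rule AE_summable_of_summable_expectation_sq)
  qed
  then have "AE \<omega> in M. \<forall>b\<in>Basis. summable (\<lambda>i. X i \<omega> \<bullet> b)"
    by (rule AE_finite_allI[OF finite_Basis])
  then show ?thesis
  proof eventually_elim
    case (elim \<omega>)
    then have "summable (\<lambda>i. \<Sum>b\<in>Basis. (X i \<omega> \<bullet> b) *\<^sub>R b)"
      by (intro summable_sum summable_scaleR_left) auto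
    then show ?case
      by (simp add: euclidean_representation)
  qed
qed

lemma (in prob_space) AE_summable_scaled_iid:
  fixes \<Theta> :: "nat \<Rightarrow> 'a \<Rightarrow> 'd::euclidean_space" and \<mu> :: "'d measure"
  assumes indep: "indep_vars (\<lambda>_. borel) \<Theta> UNIV"
    and distr: "\<And>n. distr M borel (\<Theta> n) = \<mu>"
    and integrable_sq: "integrable \<mu> (\<lambda>x. (norm x)\<^sup>2)"
    and integrable: "integrable \<mu> (\<lambda>x. x)" and zero_mean: "(\<integral>x. x \<partial>\<mu>) = 0"
    and summable: "summable (\<lambda>n. (r n)\<^sup>2)"
  shows "AE \<omega> in M. summable (\<lambda>n. r n *\<^sub>R \<Theta> n \<omega>)"
proof -
  have \<Theta>_measurable[measurable]: "\<Theta> n \<in> borel_measurable M" for n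
    using indep unfolding indep_vars_def by auto
  have transfer: "integrable M (\<lambda>\<omega>. f (\<Theta> n \<omega>)) \<and> expectation (\<lambda>\<omega>. f (\<Theta> n \<omega>)) = (\<integral>x. f x \<partial>\<mu>)"
    if "integrable \<mu> f" for n and f :: "'d \<Rightarrow> 'b::{banach, second_countable_topology}"
  proof -
    have "integrable (distr M borel (\<Theta> n)) f"
      using that distr by simp
    moreover from this have "f \<in> borel_measurable borel"
      by (auto dest: borel_measurable_integrable)
    ultimately show ?thesis
      unfolding distr[of n, symmetric]
      by (simp add: integrable_distr_eq[OF \<Theta>_measurable] integral_distr[OF \<Theta>_measurable])
  qed
  show ?thesis
  proof (rule AE_summable_indep_zero_mean)
    show "indep_vars (\<lambda>_. borel) (\<lambda>n \<omega>. r n *\<^sub>R \<Theta> n \<omega>) UNIV"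
      by (rule indep_vars_compose2[OF indep]) measurable
    show "integrable M (\<lambda>\<omega>. r n *\<^sub>R \<Theta> n \<omega>)" for n
      using transfer[OF integrable] by auto
    show "expectation (\<lambda>\<omega>. r n *\<^sub>R \<Theta> n \<omega>) = 0" for n
      using transfer[OF integrable] zero_mean by simp
    show "integrable M (\<lambda>\<omega>. (norm (r n *\<^sub>R \<Theta> n \<omega>))\<^sup>2)" for n
      using transfer[OF integrable_sq] by (simp add: power_mult_distrib)
    show "summable (\<lambda>n. expectation (\<lambda>\<omega>. (norm (r n *\<^sub>R \<Theta> n \<omega>))\<^sup>2))"
      using transfer[OF integrable_sq] summable_mult2[OF summable] by (simp add: power_mult_distrib)
  qed
qed

section \<open>The sum of the series has no atoms\<close>

lemma prob_singleton_less_1: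
  fixes \<mu> :: "'d::euclidean_space measure"
  assumes "prob_space \<mu>" and sets_\<mu>: "sets \<mu> = sets borel"
    and zero_mean: "(\<integral>x. x \<partial>\<mu>) = 0" and not_return: "\<mu> \<noteq> return borel 0"
  shows "measure \<mu> {y} < 1"
proof (rule ccontr)
  interpret prob_space \<mu> by fact
  assume "\<not> prob {y} < 1"
  then have "prob {y} = 1"
    using prob_le_1[of "{y}"] by linarith
  then have "\<mu> = return \<mu> y"
    using sets_\<mu> by (intro AE_eq_constD) (auto dest: AE_prob_1)
  also have "\<dots> = return borel y"
    using sets_\<mu> by (rule return_cong)
  finally have "\<mu> = return borel y" .
  moreover from this have "y = 0"
    using zero_mean integral_return[of y borel "\<lambda>x. x"] by simp
  ultimately show False
    using not_return by simp
qed

lemma (in prob_space) ex_less_1_bound_prob_singleton: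
  assumes events: "\<And>y. {y} \<in> events" and less_1: "\<And>y. prob {y} < 1"
  shows "\<exists>q<1. \<forall>y. prob {y} \<le> q"
proof (cases "\<exists>y. 1/2 < prob {y}")
  case True
  then obtain y where y: "1/2 < prob {y}" ..
  have "prob {z} \<le> max (1/2) (prob {y})" for z
  proof (cases "z = y")
    case False
    then have "prob {z} + prob {y} = prob ({z} \<union> {y})"
      using events by (intro finite_measure_Union[symmetric]) auto
    also have "\<dots> \<le> 1"
      by simp
    finally show ?thesis
      using y by linarith
  qed simp
  with less_1[of y] show ?thesis
    by (intro exI[of _ "max (1/2) (prob {y})"]) auto
next
  case False
  then show ?thesis
    by (intro exI[of _ "1/2"]) (auto simp: not_less)
qed

lemma (in prob_space) prob_indep_coordinate_eq_fun_le:
  fixes \<Theta> :: "'i \<Rightarrow> 'a \<Rightarrow> 'd::euclidean_space" and k :: 'i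
  defines "V \<equiv> \<lambda>\<omega>. restrict (\<lambda>i. \<Theta> i \<omega>) (UNIV - {k})"
  assumes indep: "indep_vars (\<lambda>_. borel) \<Theta> UNIV"
    and atoms: "\<And>y. prob (\<Theta> k -` {y} \<inter> space M) \<le> q"
    and G: "G \<in> sets (PiM (UNIV - {k}) (\<lambda>_. borel))"
    and h: "h \<in> borel_measurable (PiM (UNIV - {k}) (\<lambda>_. borel))"
  shows "prob {\<omega>\<in>space M. V \<omega> \<in> G \<and> \<Theta> k \<omega> = h (V \<omega>)} \<le> q * prob {\<omega>\<in>space M. V \<omega> \<in> G}"
proof -
  define N where "N = PiM (UNIV - {k}) (\<lambda>_. borel :: 'd measure)"
  define K where "K = PiM {k} (\<lambda>_. borel :: 'd measure)"
  define W where "W \<omega> = restrict (\<lambda>i. \<Theta> i \<omega>) {k}" for \<omega>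
  have indep_VW: "indep_var N V K W"
    unfolding V_def W_def N_def K_def by (rule indep_var_restrict[OF indep]) auto
  have V[measurable]: "V \<in> M \<rightarrow>\<^sub>M N" and W[measurable]: "W \<in> M \<rightarrow>\<^sub>M K"
    using indep_var_rv1[OF indep_VW] indep_var_rv2[OF indep_VW] by auto
  have coord_k[measurable]: "(\<lambda>w. w k) \<in> borel_measurable K"
    unfolding K_def by (rule measurable_component_singleton) auto
  note G[folded N_def, measurable] h[folded N_def, measurable]
  have q_nonneg: "0 \<le> q"
    using atoms[of 0] measure_nonneg[of M "\<Theta> k -` {0} \<inter> space M"] by linarith
  interpret W_distr: prob_space "distr M K W"
    by (rule prob_space_distr[OF W])
  define H where "H = {p \<in> space (N \<Otimes>\<^sub>M K). fst p \<in> G \<and> snd p k = h (fst p)}"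
  have H[measurable]: "H \<in> sets (N \<Otimes>\<^sub>M K)"
    unfolding H_def by measurable
  have "{\<omega>\<in>space M. V \<omega> \<in> G \<and> \<Theta> k \<omega> = h (V \<omega>)} = (\<lambda>\<omega>. (V \<omega>, W \<omega>)) -` H \<inter> space M"
    using measurable_space[OF V] measurable_space[OF W] by (auto simp: H_def space_pair_measure W_def)
  then have "emeasure M {\<omega>\<in>space M. V \<omega> \<in> G \<and> \<Theta> k \<omega> = h (V \<omega>)}
      = emeasure (distr M (N \<Otimes>\<^sub>M K) (\<lambda>\<omega>. (V \<omega>, W \<omega>))) H"
    by (simp add: emeasure_distr)
  also have "\<dots> = emeasure (distr M N V \<Otimes>\<^sub>M distr M K W) H"
    using indep_VW by (simp add: indep_var_distribution_eq)
  also have "\<dots> = (\<integral>\<^sup>+v. emeasure (distr M K W) (Pair v -` H) \<partial>distr M N V)"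
    by (rule W_distr.emeasure_pair_measure_alt) simp
  also have "\<dots> \<le> (\<integral>\<^sup>+v. ennreal q * indicator G v \<partial>distr M N V)"
  proof (rule nn_integral_mono)
    fix v assume "v \<in> space (distr M N V)"
    then have "Pair v -` H = (if v \<in> G then {w \<in> space K. w k = h v} else {})"
      by (auto simp: H_def space_pair_measure)
    moreover have "W -` {w \<in> space K. w k = h v} \<inter> space M = \<Theta> k -` {h v} \<inter> space M"
      using measurable_space[OF W] by (auto simp: W_def)
    ultimately show "emeasure (distr M K W) (Pair v -` H) \<le> ennreal q * indicator G v"
      using atoms[of "h v"] by (simp add: emeasure_distr emeasure_eq_measure ennreal_leI)
  qed
  also have "\<dots> = ennreal q * emeasure M (V -` G \<inter> space M)"
    by (simp add: nn_integral_cmult_indicator emeasure_distr)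
  also have "V -` G \<inter> space M = {\<omega>\<in>space M. V \<omega> \<in> G}"
    by auto
  finally have "ennreal (prob {\<omega>\<in>space M. V \<omega> \<in> G \<and> \<Theta> k \<omega> = h (V \<omega>)})
      \<le> ennreal (q * prob {\<omega>\<in>space M. V \<omega> \<in> G})"
    using q_nonneg by (simp add: emeasure_eq_measure ennreal_mult)
  then show ?thesis
    using q_nonneg by (simp add: ennreal_le_iff)
qed

lemma (in prob_space) tendsto_prob_dist_ge:
  fixes X :: "nat \<Rightarrow> 'a \<Rightarrow> 'd::{metric_space, second_countable_topology}"
  assumes [measurable]: "\<And>n. X n \<in> borel_measurable M" "Y \<in> borel_measurable M"
    and lim: "AE \<omega> in M. (\<lambda>n. X n \<omega>) \<longlonglongrightarrow> Y \<omega>" and "0 < \<delta>"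
  shows "(\<lambda>n. prob {\<omega>\<in>space M. \<delta> \<le> dist (X n \<omega>) (Y \<omega>)}) \<longlonglongrightarrow> 0"
proof -
  define E where "E n = {\<omega>\<in>space M. \<delta> \<le> dist (X n \<omega>) (Y \<omega>)}" for n
  have [measurable]: "E n \<in> events" for n
    unfolding E_def by measurable
  have "(\<lambda>n. expectation (indicator (E n) :: 'a \<Rightarrow> real)) \<longlonglongrightarrow> expectation (\<lambda>_. 0 :: real)"
  proof (rule integral_dominated_convergence[where w = "\<lambda>_. 1"])
    show "AE \<omega> in M. (\<lambda>n. indicator (E n) \<omega> :: real) \<longlonglongrightarrow> 0"
      using lim
    proof eventually_elim
      case (elim \<omega>)
      then have "eventually (\<lambda>n. dist (X n \<omega>) (Y \<omega>) < \<delta>) sequentially"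
        using \<open>0 < \<delta>\<close> by (rule tendstoD)
      then have "eventually (\<lambda>n. indicator (E n) \<omega> = (0 :: real)) sequentially"
        by eventually_elim (simp add: E_def)
      then show ?case
        by (rule tendsto_eventually)
    qed
  qed auto
  then show ?thesis
    by (simp add: E_def)
qed

lemma sets_Collect_tendsto[measurable]:
  fixes A :: "nat \<Rightarrow> 'a \<Rightarrow> 'b::{banach, second_countable_topology}"
  assumes [measurable]: "\<And>n. A n \<in> borel_measurable M"
  shows "{\<omega>\<in>space M. (\<lambda>n. A n \<omega>) \<longlonglongrightarrow> x} \<in> sets M"
proof -
  have "{\<omega>\<in>space M. (\<lambda>n. A n \<omega>) \<longlonglongrightarrow> x} = {\<omega>\<in>space M. Cauchy (\<lambda>n. A n \<omega>) \<and> lim (\<lambda>n. A n \<omega>) = x}"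
    by (auto simp: Cauchy_convergent_iff convergent_LIMSEQ_iff limI dest: LIMSEQ_imp_Cauchy)
  also have "\<dots> \<in> sets M"
    by measurable
  finally show ?thesis .
qed

lemma (in prob_space) prob_tendsto_le_prob_lim_near:
  fixes A :: "nat \<Rightarrow> 'a \<Rightarrow> 'd::{banach, second_countable_topology}"
  assumes [measurable]: "\<And>n. A n \<in> borel_measurable M"
    and convergent: "AE \<omega> in M. convergent (\<lambda>n. A n \<omega>)"
    and "0 \<le> q" "0 < \<delta>"
    and bound: "\<And>n. prob {\<omega>\<in>space M. (\<lambda>n. A n \<omega>) \<longlonglongrightarrow> x \<and> dist (A n \<omega>) x < \<delta>}
                     \<le> q * prob {\<omega>\<in>space M. dist (A n \<omega>) x < \<delta>}"
  shows "prob {\<omega>\<in>space M. (\<lambda>n. A n \<omega>) \<longlonglongrightarrow> x}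
           \<le> q * prob {\<omega>\<in>space M. dist (lim (\<lambda>n. A n \<omega>)) x < 2 * \<delta>}"
proof -
  define L where "L \<omega> = lim (\<lambda>n. A n \<omega>)" for \<omega>
  define B where "B = {\<omega>\<in>space M. (\<lambda>n. A n \<omega>) \<longlonglongrightarrow> x}"
  define C where "C n = {\<omega>\<in>space M. dist (A n \<omega>) x < \<delta>}" for n
  define far where "far n = {\<omega>\<in>space M. \<delta> \<le> dist (A n \<omega>) (L \<omega>)}" for n
  define near where "near = {\<omega>\<in>space M. dist (L \<omega>) x < 2 * \<delta>}"
  have L_measurable[measurable]: "L \<in> borel_measurable M"
    unfolding L_def by measurable
  have [measurable]: "B \<in> events" "C n \<in> events" "far n \<in> events" "near \<in> events" for n
    unfolding B_def C_def far_def near_def by measurable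
  have "(\<lambda>n. prob (far n)) \<longlonglongrightarrow> 0"
    unfolding far_def using convergent \<open>0 < \<delta>\<close>
    by (intro tendsto_prob_dist_ge) (auto simp: L_def convergent_LIMSEQ_iff)
  then have lim: "(\<lambda>n. q * (prob near + prob (far n)) + prob (far n)) \<longlonglongrightarrow> q * (prob near + 0) + 0"
    by (intro tendsto_intros)
  have "prob B \<le> q * (prob near + prob (far n)) + prob (far n)" for n
  proof -
    have "B - C n \<subseteq> far n"
      by (auto simp: B_def C_def far_def L_def limI dist_commute)
    moreover have "C n \<subseteq> near \<union> far n"
    proof
      fix \<omega> assume "\<omega> \<in> C n"
      moreover have "dist (L \<omega>) x \<le> dist (A n \<omega>) (L \<omega>) + dist (A n \<omega>) x"
        by (rule dist_triangle3)
      ultimately show "\<omega> \<in> near \<union> far n"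
        by (auto simp: C_def far_def near_def)
    qed
    ultimately have far: "prob (B - C n) \<le> prob (far n)" and "prob (C n) \<le> prob (near \<union> far n)"
      by (auto intro: finite_measure_mono)
    moreover have "prob (near \<union> far n) \<le> prob near + prob (far n)"
      by (rule measure_Un_le) auto
    ultimately have "q * prob (C n) \<le> q * (prob near + prob (far n))"
      using \<open>0 \<le> q\<close> by (intro mult_left_mono) auto
    moreover have "prob B \<le> prob (B \<inter> C n) + prob (B - C n)"
      using measure_Un_le[of "B \<inter> C n" M "B - C n"] by (simp add: Int_Diff_Un)
    moreover have "B \<inter> C n = {\<omega>\<in>space M. (\<lambda>n. A n \<omega>) \<longlonglongrightarrow> x \<and> dist (A n \<omega>) x < \<delta>}"
      by (auto simp: B_def C_def)
    then have "prob (B \<inter> C n) \<le> q * prob (C n)"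
      using bound[of n] by (simp add: C_def)
    ultimately show ?thesis
      using far by linarith
  qed
  then have "prob B \<le> q * (prob near + 0) + 0"
    using LIMSEQ_le_const[OF lim] by blast
  then show ?thesis
    by (simp add: B_def near_def L_def)
qed

lemma (in prob_space) prob_tendsto_eq_0:
  fixes A :: "nat \<Rightarrow> 'a \<Rightarrow> 'd::{banach, second_countable_topology}"
  assumes [measurable]: "\<And>n. A n \<in> borel_measurable M"
    and convergent: "AE \<omega> in M. convergent (\<lambda>n. A n \<omega>)"
    and "0 \<le> q" "q < 1"
    and bound: "\<And>n \<delta>. 0 < \<delta> \<Longrightarrow>
      prob {\<omega>\<in>space M. (\<lambda>n. A n \<omega>) \<longlonglongrightarrow> x \<and> dist (A n \<omega>) x < \<delta>}
        \<le> q * prob {\<omega>\<in>space M. dist (A n \<omega>) x < \<delta>}"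
  shows "prob {\<omega>\<in>space M. (\<lambda>n. A n \<omega>) \<longlonglongrightarrow> x} = 0"
proof -
  define L where "L \<omega> = lim (\<lambda>n. A n \<omega>)" for \<omega>
  define B where "B = {\<omega>\<in>space M. (\<lambda>n. A n \<omega>) \<longlonglongrightarrow> x}"
  define d where "d j = inverse (real (Suc j))" for j
  define near where "near j = {\<omega>\<in>space M. dist (L \<omega>) x < 2 * d j}" for j
  have L_measurable[measurable]: "L \<in> borel_measurable M"
    unfolding L_def by measurable
  have near_events: "near j \<in> events" for j
    unfolding near_def by measurable
  have B_events: "B \<in> events"
    unfolding B_def by measurable
  have d_pos: "0 < d j" for j
    by (simp add: d_def)
  have d_mono: "d (Suc j) \<le> d j" for j
    by (simp add: d_def field_simps)
  have "decseq near"
  proof (rule decseq_SucI)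
    fix j
    show "near (Suc j) \<subseteq> near j"
      using d_mono[of j] by (auto simp: near_def)
  qed
  then have lim: "(\<lambda>j. q * prob (near j)) \<longlonglongrightarrow> q * prob (\<Inter>j. near j)"
    using near_events by (intro tendsto_mult_left finite_Lim_measure_decseq) auto
  have "prob B \<le> q * prob (near j)" for j
    unfolding B_def near_def L_def
    by (rule prob_tendsto_le_prob_lim_near[OF _ convergent \<open>0 \<le> q\<close> d_pos bound[OF d_pos]]) auto
  then have "prob B \<le> q * prob (\<Inter>j. near j)"
    using LIMSEQ_le_const[OF lim] by blast
  moreover have "(\<Inter>j. near j) = {\<omega>\<in>space M. L \<omega> = x}"
  proof (intro equalityI subsetI)
    fix \<omega> assume \<omega>: "\<omega> \<in> (\<Inter>j. near j)"
    have "dist (L \<omega>) x \<le> 0"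
    proof (rule LIMSEQ_le_const)
      show "(\<lambda>j. 2 * d j) \<longlonglongrightarrow> 0"
        unfolding d_def using tendsto_mult_right_zero[OF LIMSEQ_inverse_real_of_nat] by simp
      show "\<exists>N. \<forall>j\<ge>N. dist (L \<omega>) x \<le> 2 * d j"
        using \<omega> by (auto simp: near_def less_imp_le)
    qed
    with \<omega> show "\<omega> \<in> {\<omega>\<in>space M. L \<omega> = x}"
      by (auto simp: near_def)
  qed (auto simp: near_def d_pos)
  moreover have "prob {\<omega>\<in>space M. L \<omega> = x} \<le> prob B"
    using convergent B_events
    by (intro finite_measure_mono_AE) (auto elim!: AE_mp simp: B_def L_def convergent_LIMSEQ_iff)
  ultimately have "prob B \<le> q * prob B"
    using \<open>0 \<le> q\<close> by (metis mult_left_mono order_trans)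
  with \<open>q < 1\<close> show ?thesis
    unfolding B_def[symmetric] using measure_nonneg[of M B] by (simp add: mult_le_cancel_right1)
qed

lemma (in prob_space) prob_sums_partial_sum_near_le:
  fixes \<Theta> :: "nat \<Rightarrow> 'a \<Rightarrow> 'd::euclidean_space"
  assumes indep: "indep_vars (\<lambda>_. borel) \<Theta> UNIV"
    and atoms: "\<And>y. prob (\<Theta> k -` {y} \<inter> space M) \<le> q"
    and "r k \<noteq> 0" "n \<le> k"
  shows "prob {\<omega>\<in>space M. (\<lambda>i. r i *\<^sub>R \<Theta> i \<omega>) sums x \<and> dist (\<Sum>i<n. r i *\<^sub>R \<Theta> i \<omega>) x < \<delta>}
           \<le> q * prob {\<omega>\<in>space M. dist (\<Sum>i<n. r i *\<^sub>R \<Theta> i \<omega>) x < \<delta>}"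
proof -
  define P where "P = PiM (UNIV - {k}) (\<lambda>_. borel :: 'd measure)"
  define V where "V \<omega> = restrict (\<lambda>i. \<Theta> i \<omega>) (UNIV - {k})" for \<omega>
  define G where "G = {v \<in> space P. dist (\<Sum>i<n. r i *\<^sub>R v i) x < \<delta>}"
  define h where "h v = inverse (r k) *\<^sub>R (x - (\<Sum>i. if i = k then 0 else r i *\<^sub>R v i))"
    for v :: "nat \<Rightarrow> 'd"
  have coord: "(\<lambda>v. v i) \<in> borel_measurable P" if "i \<noteq> k" for i
    unfolding P_def using that by (intro measurable_component_singleton) auto
  have "(\<lambda>v. if i = k then 0 else r i *\<^sub>R v i) \<in> borel_measurable P" for i
    using coord[of i] by (cases "i = k") auto
  then have h: "h \<in> borel_measurable P"
    unfolding h_def by (intro borel_measurable_scaleR borel_measurable_diff borel_measurable_suminf) auto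
  have "(\<lambda>v. \<Sum>i<n. r i *\<^sub>R v i) \<in> borel_measurable P"
    using coord \<open>n \<le> k\<close> by (intro borel_measurable_sum borel_measurable_scaleR) auto
  then have G: "G \<in> sets P"
    unfolding G_def by measurable
  have [measurable]: "\<Theta> i \<in> borel_measurable M" for i
    using indep unfolding indep_vars_def by auto
  have V_measurable[measurable]: "V \<in> M \<rightarrow>\<^sub>M P"
    unfolding P_def V_def by measurable
  have "{\<omega>\<in>space M. (\<lambda>i. r i *\<^sub>R \<Theta> i \<omega>) sums x \<and> dist (\<Sum>i<n. r i *\<^sub>R \<Theta> i \<omega>) x < \<delta>}
      \<subseteq> {\<omega>\<in>space M. V \<omega> \<in> G \<and> \<Theta> k \<omega> = h (V \<omega>)}"
  proof safe
    fix \<omega> assume \<omega>: "\<omega> \<in> space M" "(\<lambda>i. r i *\<^sub>R \<Theta> i \<omega>) sums x"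
      "dist (\<Sum>i<n. r i *\<^sub>R \<Theta> i \<omega>) x < \<delta>"
    have V_space: "V \<omega> \<in> space P"
      using measurable_space[OF V_measurable \<open>\<omega> \<in> space M\<close>] .
    then show "V \<omega> \<in> G"
      using \<omega>(3) \<open>n \<le> k\<close> by (simp add: G_def V_def)
    have "(\<lambda>i. r i *\<^sub>R \<Theta> i \<omega> - (if i = k then r i *\<^sub>R \<Theta> i \<omega> else 0)) sums (x - r k *\<^sub>R \<Theta> k \<omega>)"
      by (rule sums_diff[OF \<omega>(2) sums_single])
    moreover have "(\<lambda>i. r i *\<^sub>R \<Theta> i \<omega> - (if i = k then r i *\<^sub>R \<Theta> i \<omega> else 0))
        = (\<lambda>i. if i = k then 0 else r i *\<^sub>R V \<omega> i)"
      by (auto simp: V_def)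
    ultimately show "\<Theta> k \<omega> = h (V \<omega>)"
      using \<open>r k \<noteq> 0\<close> by (simp add: h_def sums_iff)
  qed
  moreover have "{\<omega>\<in>space M. V \<omega> \<in> G \<and> \<Theta> k \<omega> = h (V \<omega>)} \<in> events"
    using G h by measurable
  ultimately have "prob {\<omega>\<in>space M. (\<lambda>i. r i *\<^sub>R \<Theta> i \<omega>) sums x \<and> dist (\<Sum>i<n. r i *\<^sub>R \<Theta> i \<omega>) x < \<delta>}
      \<le> prob {\<omega>\<in>space M. V \<omega> \<in> G \<and> \<Theta> k \<omega> = h (V \<omega>)}"
    by (rule finite_measure_mono)
  also have "\<dots> \<le> q * prob {\<omega>\<in>space M. V \<omega> \<in> G}"
    unfolding V_def by (rule prob_indep_coordinate_eq_fun_le[OF indep atoms G[unfolded P_def] h[unfolded P_def]])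
  also have "{\<omega>\<in>space M. V \<omega> \<in> G} = {\<omega>\<in>space M. dist (\<Sum>i<n. r i *\<^sub>R \<Theta> i \<omega>) x < \<delta>}"
    using measurable_space[OF V_measurable] \<open>n \<le> k\<close> by (auto simp: G_def V_def)
  finally show ?thesis .
qed

lemma (in prob_space) prob_sums_eq_0:
  fixes \<Theta> :: "nat \<Rightarrow> 'a \<Rightarrow> 'd::euclidean_space"
  assumes indep: "indep_vars (\<lambda>_. borel) \<Theta> UNIV"
    and atoms: "\<And>k y. prob (\<Theta> k -` {y} \<inter> space M) \<le> q" and "q < 1"
    and nonzero: "infinite {n. r n \<noteq> 0}"
    and summable: "AE \<omega> in M. summable (\<lambda>n. r n *\<^sub>R \<Theta> n \<omega>)"
  shows "prob {\<omega>\<in>space M. (\<lambda>n. r n *\<^sub>R \<Theta> n \<omega>) sums x} = 0"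
  unfolding sums_def
proof (rule prob_tendsto_eq_0[OF _ _ _ \<open>q < 1\<close>])
  have [measurable]: "\<Theta> i \<in> borel_measurable M" for i
    using indep unfolding indep_vars_def by auto
  show "(\<lambda>\<omega>. \<Sum>i<n. r i *\<^sub>R \<Theta> i \<omega>) \<in> borel_measurable M" for n
    by measurable
  show "AE \<omega> in M. convergent (\<lambda>n. \<Sum>i<n. r i *\<^sub>R \<Theta> i \<omega>)"
    using summable by (simp add: summable_iff_convergent)
  show "0 \<le> q"
    using atoms[of 0 0] measure_nonneg[of M "\<Theta> 0 -` {0} \<inter> space M"] by linarith
  fix n and \<delta> :: real
  obtain k where k: "r k \<noteq> 0" "n \<le> k"
    using nonzero by (auto simp: infinite_nat_iff_unbounded_le)
  from prob_sums_partial_sum_near_le[where r = r and x = x and \<delta> = \<delta>, OF indep atoms[of k] k]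
  show "prob {\<omega>\<in>space M. (\<lambda>n. \<Sum>i<n. r i *\<^sub>R \<Theta> i \<omega>) \<longlonglongrightarrow> x \<and> dist (\<Sum>i<n. r i *\<^sub>R \<Theta> i \<omega>) x < \<delta>}
      \<le> q * prob {\<omega>\<in>space M. dist (\<Sum>i<n. r i *\<^sub>R \<Theta> i \<omega>) x < \<delta>}"
    by (simp only: sums_def)
qed

theorem lemma2p5:
  fixes M :: "'a measure"
    and \<mu> :: "'d::euclidean_space measure"
    and \<Theta> :: "nat \<Rightarrow> 'a \<Rightarrow> 'd"
    and r :: "nat \<Rightarrow> real"
  assumes "prob_space M"
    and "prob_space \<mu>"
    and "sets \<mu> = sets borel"
    and "\<mu> \<noteq> return borel 0"
    and "integrable \<mu> (\<lambda>x. (norm x)\<^sup>2)"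
    and "integrable \<mu> (\<lambda>x. x)"
    and "(\<integral>x. x \<partial>\<mu>) = 0"
    and "\<And>n. \<Theta> n \<in> borel_measurable M"
    and "prob_space.indep_vars M (\<lambda>_. borel) \<Theta> UNIV"
    and "\<And>n. distr M borel (\<Theta> n) = \<mu>"
    and "summable (\<lambda>n. (r n)\<^sup>2)"
    and "infinite {n. r n \<noteq> 0}"
  shows "(AE \<omega> in M. summable (\<lambda>n. r n *\<^sub>R \<Theta> n \<omega>))
     \<and> (\<forall>x. measure M {\<omega> \<in> space M. (\<lambda>n. r n *\<^sub>R \<Theta> n \<omega>) sums x} = 0)"
proof -
  interpret prob_space M by fact
  interpret \<mu>: prob_space \<mu> by fact
  have summable: "AE \<omega> in M. summable (\<lambda>n. r n *\<^sub>R \<Theta> n \<omega>)"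
    by (rule AE_summable_scaled_iid[OF assms(9,10,5,6,7,11)])
  have "{y} \<in> sets \<mu>" for y
    using assms(3) by simp
  then obtain q where "q < 1" and \<mu>_atoms: "\<And>y. measure \<mu> {y} \<le> q"
    using \<mu>.ex_less_1_bound_prob_singleton prob_singleton_less_1[OF assms(2,3,7,4)] by blast
  have "prob (\<Theta> k -` {y} \<inter> space M) \<le> q" for k y
    using \<mu>_atoms[of y] measure_distr[OF assms(8)[of k], of "{y}"] assms(10)[of k] by simp
  with summable show ?thesis
    using prob_sums_eq_0[OF assms(9) _ \<open>q < 1\<close> assms(12) summable] by blast
qed

end
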